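(* Let $\mathcal{L}$ be a distributive abstract logic and define $a\le b$ iff $S_a\subseteq S_b$ for $a,b\in Expr_{\mathcal{L}}$, where $S_a=\{P\in PTh_{\mathcal{L}}: a\in P\}$. Then $(Expr_{\mathcal{L}},\le)$ is a distributive lattice with $\inf\{a,b\}=a\wedge b$ and $\sup\{a,b\}=a\vee b$; if $\mathcal{L}$ is bounded, it is a bounded lattice with least element $\bot$ and greatest element $\top$.
   Context: An abstract logic is a triple $\mathcal{L}=(Expr_{\mathcal{L}},Th_{\mathcal{L}},\mathcal{C}_{\mathcal{L}})$ where $Expr_{\mathcal{L}}$ is a set, $Th_{\mathcal{L}}$ a non-empty set of subsets of $Expr_{\mathcal{L}}$ (theories) closed under intersections of non-empty subfamilies, and $\mathcal{C}_{\mathcal{L}}$ a set of operations on $Expr_{\mathcal{L}}$. $\mathcal{L}$ is closed under union of chains if the union of every non-empty chain of theories is a theory. A theory $T$ is prime if $T=\bigcap\mathcal{T}$ with $\mathcal{T}\subseteq Th_{\mathcal{L}}$ non-empty finite implies $T\in\mathcal{T}$; totally prime if this holds for non-empty $\mathcal{T}$ of any size. $PTh_{\mathcal{L}}$, $TPTh_{\mathcal{L}}$ denote these sets. A distributive abstract logic is one closed under union of chains with binary connectives $\vee,\wedge$ such that for all $a,b$ and all $T\in TPTh_{\mathcal{L}}$: $a\vee b\in T$ iff $a\in T$ or $b\in T$; $a\wedge b\in T$ iff $a,b\in T$. It is bounded if moreover there are formulas $\top$ belonging to every theory and $\bot$ belonging to no theory. The paper treats elements $a,b$ with $a\le b$ and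 $b\le a$ as equal (equality $=_{\le}$ induced by the order). *)

theory Defs
  imports Main
begin

text \<open>An abstract logic: expressions form the carrier set E; Th is the set of theories.
  The operation set C_L only matters through the two binary connectives Or, And.\<close>

definition abstract_logic :: "'a set \<Rightarrow> 'a set set \<Rightarrow> bool" where
  "abstract_logic E Th \<longleftrightarrow> Th \<noteq> {} \<and> (\<forall>T\<in>Th. T \<subseteq> E) \<and>
     (\<forall>\<T>. \<T> \<subseteq> Th \<and> \<T> \<noteq> {} \<longrightarrow> \<Inter>\<T> \<in> Th)"

definition closed_union_chains :: "'a set set \<Rightarrow> bool" where
  "closed_union_chains Th \<longleftrightarrow>
     (\<forall>\<C>. \<C> \<subseteq> Th \<and> \<C> \<noteq> {} \<and> (\<forall>X\<in>\<C>. \<forall>Y\<in>\<C>. X \<subseteq> Y \<or> Y \<subseteq> X) \<longrightarrow> \<Union>\<C> \<in> Th)"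

definition prime_theory :: "'a set set \<Rightarrow> 'a set \<Rightarrow> bool" where
  "prime_theory Th T \<longleftrightarrow> T \<in> Th \<and>
     (\<forall>\<T>. \<T> \<subseteq> Th \<and> \<T> \<noteq> {} \<and> finite \<T> \<and> T = \<Inter>\<T> \<longrightarrow> T \<in> \<T>)"

definition totally_prime_theory :: "'a set set \<Rightarrow> 'a set \<Rightarrow> bool" where
  "totally_prime_theory Th T \<longleftrightarrow> T \<in> Th \<and>
     (\<forall>\<T>. \<T> \<subseteq> Th \<and> \<T> \<noteq> {} \<and> T = \<Inter>\<T> \<longrightarrow> T \<in> \<T>)"

definition distributive_logic ::
  "'a set \<Rightarrow> 'a set set \<Rightarrow> ('a \<Rightarrow> 'a \<Rightarrow> 'a) \<Rightarrow> ('a \<Rightarrow> 'a \<Rightarrow> 'a) \<Rightarrow> bool" where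
  "distributive_logic E Th Or And \<longleftrightarrow>
     abstract_logic E Th \<and> closed_union_chains Th \<and>
     (\<forall>a\<in>E. \<forall>b\<in>E. Or a b \<in> E \<and> And a b \<in> E) \<and>
     (\<forall>a\<in>E. \<forall>b\<in>E. \<forall>T. totally_prime_theory Th T \<longrightarrow>
        (Or a b \<in> T \<longleftrightarrow> a \<in> T \<or> b \<in> T) \<and>
        (And a b \<in> T \<longleftrightarrow> a \<in> T \<and> b \<in> T))"

definition bounded_logic :: "'a set \<Rightarrow> 'a set set \<Rightarrow> 'a \<Rightarrow> 'a \<Rightarrow> bool" where
  "bounded_logic E Th Top Bot \<longleftrightarrow> Top \<in> E \<and> Bot \<in> E \<and>
     (\<forall>T\<in>Th. Top \<in> T \<and> Bot \<notin> T)"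

definition S_set :: "'a set set \<Rightarrow> 'a \<Rightarrow> 'a set set" where
  "S_set Th a = {P. prime_theory Th P \<and> a \<in> P}"

definition leq_L :: "'a set set \<Rightarrow> 'a \<Rightarrow> 'a \<Rightarrow> bool" where
  "leq_L Th a b \<longleftrightarrow> S_set Th a \<subseteq> S_set Th b"

end

theory Submission
  imports Defs
begin

text \<open>The order on expressions is defined through prime theories, but the connectives are only
  controlled on totally prime theories. The two agree: every theory omitting an expression b
  extends, by Zorn's lemma, to a maximal theory omitting b, and such a maximal theory is totally
  prime, since each theory strictly above it contains b and hence so does their intersection.
  So a \<le> b holds iff every totally prime theory containing a contains b, and the lattice laws
  reduce to the Boolean laws for "or" and "and" inside a single totally prime theory.\<close>

lemma totally_prime_theory_imp_prime_theory:
  "totally_prime_theory Th T \<Longrightarrow> prime_theory Th T"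
  unfolding totally_prime_theory_def prime_theory_def by blast

lemma maximal_theory_omitting_is_totally_prime:
  assumes M: "M \<in> Th" "b \<notin> M"
    and maximal: "\<And>X. X \<in> Th \<Longrightarrow> M \<subseteq> X \<Longrightarrow> b \<notin> X \<Longrightarrow> X = M"
  shows "totally_prime_theory Th M"
  unfolding totally_prime_theory_def
proof (intro conjI allI impI)
  show "M \<in> Th" by (fact M(1))
  fix \<T> assume \<T>: "\<T> \<subseteq> Th \<and> \<T> \<noteq> {} \<and> M = \<Inter>\<T>"
  show "M \<in> \<T>"
  proof (rule ccontr)
    assume "M \<notin> \<T>"
    then have "\<forall>X\<in>\<T>. b \<in> X" using \<T> maximal by blast
    then have "b \<in> M" using \<T> by blast
    with M(2) show False by contradiction
  qed
qed

lemma totally_prime_theory_extending_omitting: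
  assumes "closed_union_chains Th" and "P \<in> Th" and "b \<notin> P"
  obtains Q where "totally_prime_theory Th Q" "P \<subseteq> Q" "b \<notin> Q"
proof -
  let ?A = "{Q\<in>Th. P \<subseteq> Q \<and> b \<notin> Q}"
  have "\<exists>M\<in>?A. \<forall>X\<in>?A. M \<subseteq> X \<longrightarrow> X = M"
  proof (rule subset_Zorn_nonempty)
    show "?A \<noteq> {}" using assms(2,3) by blast
    fix \<C> assume "\<C> \<noteq> {}" and "subset.chain ?A \<C>"
    then have "\<C> \<subseteq> ?A" and "\<forall>X\<in>\<C>. \<forall>Y\<in>\<C>. X \<subseteq> Y \<or> Y \<subseteq> X"
      by (auto simp: subset.chain_def)
    moreover from \<open>\<C> \<subseteq> ?A\<close> have "\<C> \<subseteq> Th" by blast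
    ultimately have "\<Union>\<C> \<in> Th"
      using assms(1) \<open>\<C> \<noteq> {}\<close> unfolding closed_union_chains_def by blast
    with \<open>\<C> \<noteq> {}\<close> \<open>\<C> \<subseteq> ?A\<close> show "\<Union>\<C> \<in> ?A" by blast
  qed
  then obtain M where "M \<in> ?A" and "\<forall>X\<in>?A. M \<subseteq> X \<longrightarrow> X = M" by blast
  then have "totally_prime_theory Th M"
    by (intro maximal_theory_omitting_is_totally_prime[of M Th b]) auto
  with \<open>M \<in> ?A\<close> show thesis using that by blast
qed

lemma leq_L_iff_totally_prime:
  assumes "closed_union_chains Th"
  shows "leq_L Th a b \<longleftrightarrow> (\<forall>T. totally_prime_theory Th T \<longrightarrow> a \<in> T \<longrightarrow> b \<in> T)"
proof
  assume "leq_L Th a b"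
  then show "\<forall>T. totally_prime_theory Th T \<longrightarrow> a \<in> T \<longrightarrow> b \<in> T"
    unfolding leq_L_def S_set_def using totally_prime_theory_imp_prime_theory by blast
next
  assume tp: "\<forall>T. totally_prime_theory Th T \<longrightarrow> a \<in> T \<longrightarrow> b \<in> T"
  show "leq_L Th a b" unfolding leq_L_def S_set_def
  proof (intro subsetI CollectI conjI; elim CollectE conjE)
    fix P assume "prime_theory Th P" "a \<in> P"
    then show "prime_theory Th P" by simp
    show "b \<in> P"
    proof (rule ccontr)
      assume "b \<notin> P"
      moreover have "P \<in> Th" using \<open>prime_theory Th P\<close> unfolding prime_theory_def by simp
      ultimately obtain Q where "totally_prime_theory Th Q" "P \<subseteq> Q" "b \<notin> Q"
        using totally_prime_theory_extending_omitting[OF assms] by blast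
      with tp \<open>a \<in> P\<close> show False by blast
    qed
  qed
qed

lemma leq_L_refl: "leq_L Th a a"
  unfolding leq_L_def by simp

lemma leq_L_trans: "leq_L Th a b \<Longrightarrow> leq_L Th b c \<Longrightarrow> leq_L Th a c"
  unfolding leq_L_def by blast

lemma leq_L_bounds:
  assumes "bounded_logic E Th Top Bot"
  shows "leq_L Th Bot a" and "leq_L Th a Top"
proof -
  have "Top \<in> P \<and> Bot \<notin> P" if "prime_theory Th P" for P
  proof -
    from that have "P \<in> Th" by (simp add: prime_theory_def)
    with assms show ?thesis by (simp add: bounded_logic_def)
  qed
  then show "leq_L Th Bot a" and "leq_L Th a Top"
    unfolding leq_L_def S_set_def by blast+
qed

context
  fixes E Th Or And
  assumes distributive: "distributive_logic E Th Or And"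
begin

lemma leq_L_iff_totally_prime_distributive:
  "leq_L Th a b \<longleftrightarrow> (\<forall>T. totally_prime_theory Th T \<longrightarrow> a \<in> T \<longrightarrow> b \<in> T)"
  using distributive by (simp add: distributive_logic_def leq_L_iff_totally_prime)

lemma distributive_logic_connectives_closed:
  "a \<in> E \<Longrightarrow> b \<in> E \<Longrightarrow> Or a b \<in> E"
  "a \<in> E \<Longrightarrow> b \<in> E \<Longrightarrow> And a b \<in> E"
  using distributive by (simp_all add: distributive_logic_def)

lemma totally_prime_theory_connectives:
  assumes "totally_prime_theory Th T" "a \<in> E" "b \<in> E"
  shows "Or a b \<in> T \<longleftrightarrow> a \<in> T \<or> b \<in> T"
    and "And a b \<in> T \<longleftrightarrow> a \<in> T \<and> b \<in> T"
  using distributive assms by (simp_all add: distributive_logic_def)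

lemma leq_L_And_is_meet:
  assumes "a \<in> E" "b \<in> E"
  shows "leq_L Th (And a b) a" "leq_L Th (And a b) b"
    and "leq_L Th c a \<Longrightarrow> leq_L Th c b \<Longrightarrow> leq_L Th c (And a b)"
  using assms by (simp_all add: leq_L_iff_totally_prime_distributive totally_prime_theory_connectives)

lemma leq_L_Or_is_join:
  assumes "a \<in> E" "b \<in> E"
  shows "leq_L Th a (Or a b)" "leq_L Th b (Or a b)"
    and "leq_L Th a c \<Longrightarrow> leq_L Th b c \<Longrightarrow> leq_L Th (Or a b) c"
  using assms by (auto simp: leq_L_iff_totally_prime_distributive totally_prime_theory_connectives)

lemma leq_L_distrib:
  assumes "a \<in> E" "b \<in> E" "c \<in> E"
  shows "leq_L Th (And a (Or b c)) (Or (And a b) (And a c))"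
    and "leq_L Th (Or (And a b) (And a c)) (And a (Or b c))"
  using assms distributive_logic_connectives_closed
  by (auto simp: leq_L_iff_totally_prime_distributive totally_prime_theory_connectives)

end

theorem lemma3p6:
  assumes "distributive_logic E Th Or And"
  shows "(\<forall>a\<in>E. leq_L Th a a)
    \<and> (\<forall>a\<in>E. \<forall>b\<in>E. \<forall>c\<in>E. leq_L Th a b \<and> leq_L Th b c \<longrightarrow> leq_L Th a c)
    \<and> (\<forall>a\<in>E. \<forall>b\<in>E. leq_L Th (And a b) a \<and> leq_L Th (And a b) b \<and>
         (\<forall>c\<in>E. leq_L Th c a \<and> leq_L Th c b \<longrightarrow> leq_L Th c (And a b)))
    \<and> (\<forall>a\<in>E. \<forall>b\<in>E. leq_L Th a (Or a b) \<and> leq_L Th b (Or a b) \<and>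
         (\<forall>c\<in>E. leq_L Th a c \<and> leq_L Th b c \<longrightarrow> leq_L Th (Or a b) c))
    \<and> (\<forall>a\<in>E. \<forall>b\<in>E. \<forall>c\<in>E.
         leq_L Th (And a (Or b c)) (Or (And a b) (And a c)) \<and>
         leq_L Th (Or (And a b) (And a c)) (And a (Or b c)))
    \<and> (\<forall>Top Bot. bounded_logic E Th Top Bot \<longrightarrow>
         (\<forall>a\<in>E. leq_L Th Bot a \<and> leq_L Th a Top))"
proof (intro conjI ballI allI impI)
  fix a b c assume "a \<in> E" "b \<in> E" "c \<in> E"
  note meet = leq_L_And_is_meet[OF assms \<open>a \<in> E\<close> \<open>b \<in> E\<close>]
    and join = leq_L_Or_is_join[OF assms \<open>a \<in> E\<close> \<open>b \<in> E\<close>]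
    and distrib = leq_L_distrib[OF assms \<open>a \<in> E\<close> \<open>b \<in> E\<close> \<open>c \<in> E\<close>]
  show "leq_L Th (And a b) a" "leq_L Th (And a b) b" by (fact meet(1), fact meet(2))
  show "leq_L Th a (Or a b)" "leq_L Th b (Or a b)" by (fact join(1), fact join(2))
  show "leq_L Th (And a (Or b c)) (Or (And a b) (And a c))"
    "leq_L Th (Or (And a b) (And a c)) (And a (Or b c))" by (fact distrib(1), fact distrib(2))
  show "leq_L Th c (And a b)" if "leq_L Th c a \<and> leq_L Th c b"
    using that by (elim conjE) (rule meet(3))
  show "leq_L Th (Or a b) c" if "leq_L Th a c \<and> leq_L Th b c"
    using that by (elim conjE) (rule join(3))
  show "leq_L Th a c" if "leq_L Th a b \<and> leq_L Th b c"
    using that by (elim conjE) (rule leq_L_trans)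
  show "leq_L Th a a" by (fact leq_L_refl)
  show "leq_L Th Bot a" if "bounded_logic E Th Top Bot" for Top Bot
    using that by (rule leq_L_bounds(1))
  show "leq_L Th a Top" if "bounded_logic E Th Top Bot" for Top Bot
    using that by (rule leq_L_bounds(2))
qed

end
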